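(* Let $K\ge1$, $V^{\mathrm c}>0$, and for each $k$ let $\alpha_k>0$ with $\sum_k\alpha_k=1$, $L_k>0$, $V_k^{\mathrm d}>0$, $R_k>0$. Define \[ \overline D_k(t_k,V_k^{\mathrm c})=\frac{L_k(t_kR_k+V_k^{\mathrm c})}{V_k^{\mathrm d}V_k^{\mathrm c}+t_kR_k(V_k^{\mathrm d}+V_k^{\mathrm c})} \] and consider \[ \min_{\{t_k,V_k^{\mathrm c}\}}\sum_{k=1}^K\alpha_k\overline D_k\quad\text{s.t.}\quad \sum_{k=1}^K t_k\le1,\ t_k\ge0,\quad \sum_{k=1}^K V_k^{\mathrm c}\le V^{\mathrm c},\ V_k^{\mathrm c}\ge0. \] Then the optimal solution $\{\overline t_k^*,\overline V_k^{\mathrm c*}\}$ is given by \[ \overline t_k^*=\frac{\overline V_k^{\mathrm c*}\left(\sqrt{\frac{\alpha_kL_kR_k}{\theta^*}}-V_k^{\mathrm d}\right)^+}{R_k(V_k^{\mathrm d}+\overline V_k^{\mathrm c*})},\qquad \overline V_k^{\mathrm c*}=\frac{\overline t_k^*R_k\left(\sqrt{\frac{\alpha_kL_k}{\omega^*}}-V_k^{\mathrm d}\right)^+}{\overline t_k^*R_k+V_k^{\mathrm d}},\qquad\forall k, \] where $(y)^+=\max\{y,0\}$ and $\theta^*,\omega^*$ are the optimal Lagrange multipliers associated with the constraints $\sum_k t_k\le1$ and $\sum_kV_k^{\mathrm c}\le V^{\mathrm c}$, respectively, which satisfy the active constraints $\sum_{k=1}^K\overline t_k^*=1$ and $\sum_{k=1}^K\overline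 V_k^{\mathrm c*}=V^{\mathrm c}$.
   Context: $\overline D_k$ is the end-to-end delay of device $k$ in the partial compression offloading model in the special scenario where the transmission delay of the locally compressed data is neglected, after choosing the locally compressed fraction optimally: $L_k$ raw bits, local compression speed $V_k^{\mathrm d}$, TDMA time fraction $t_k$, average channel rate $R_k$, edge compression speed $V_k^{\mathrm c}$ out of a total $V^{\mathrm c}$. *)

theory Defs
  imports Complex_Main
begin

text \<open>End-to-end delay of device k (partial compression offloading, transmission of
locally compressed data neglected, local fraction chosen optimally).
Parameters: L raw bits, Vd local compression speed, R average channel rate,
t TDMA time fraction, Vc edge compression speed.
The expression is 0/0 only at t R = 0 and Vc = 0; there we use its continuous
extension L / Vd (pure local compression), which is also its value whenever
exactly one of t, Vc is zero.\<close>

definition Dbar :: "real \<Rightarrow> real \<Rightarrow> real \<Rightarrow> real \<Rightarrow> real \<Rightarrow> real" where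
  "Dbar L Vd R t Vc =
     (let den = Vd * Vc + t * R * (Vd + Vc) in
      if den = 0 then L / Vd else L * (t * R + Vc) / den)"

definition pos_part :: "real \<Rightarrow> real" where
  "pos_part y = max y 0"

definition feasible :: "nat \<Rightarrow> real \<Rightarrow> (nat \<Rightarrow> real) \<Rightarrow> (nat \<Rightarrow> real) \<Rightarrow> bool" where
  "feasible K VC t Vc \<longleftrightarrow>
     (\<Sum>k<K. t k) \<le> 1 \<and> (\<forall>k<K. t k \<ge> 0) \<and>
     (\<Sum>k<K. Vc k) \<le> VC \<and> (\<forall>k<K. Vc k \<ge> 0)"

definition objective :: "nat \<Rightarrow> (nat \<Rightarrow> real) \<Rightarrow> (nat \<Rightarrow> real) \<Rightarrow> (nat \<Rightarrow> real)
    \<Rightarrow> (nat \<Rightarrow> real) \<Rightarrow> (nat \<Rightarrow> real) \<Rightarrow> (nat \<Rightarrow> real) \<Rightarrow> real" where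
  "objective K \<alpha> L Vd R t Vc = (\<Sum>k<K. \<alpha> k * Dbar (L k) (Vd k) (R k) (t k) (Vc k))"

definition optimal :: "nat \<Rightarrow> real \<Rightarrow> (nat \<Rightarrow> real) \<Rightarrow> (nat \<Rightarrow> real) \<Rightarrow> (nat \<Rightarrow> real)
    \<Rightarrow> (nat \<Rightarrow> real) \<Rightarrow> (nat \<Rightarrow> real) \<Rightarrow> (nat \<Rightarrow> real) \<Rightarrow> bool" where
  "optimal K VC \<alpha> L Vd R t Vc \<longleftrightarrow>
     feasible K VC t Vc \<and>
     (\<forall>t' Vc'. feasible K VC t' Vc' \<longrightarrow>
        objective K \<alpha> L Vd R t Vc \<le> objective K \<alpha> L Vd R t' Vc')"

end

theory Submission imports Defs begin

text \<open>Fixing one resource, the allocation of the other is a separable problem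
  \<open>min \<Sum>k. F k (x k)\<close> over a simplex. Some device must receive both resources: otherwise every
  delay is the local one \<open>L k / Vd k\<close>, which handing everything to one device beats. At an optimum,
  moving resource between two devices with positive shares is feasible in both directions, so their
  marginal gains coincide; these common values are the multipliers \<open>\<theta>\<close> and \<open>\<omega>\<close>, and since
  they are positive the budgets are exhausted. Solving \<open>\<theta> = \<alpha> L R V\<^sup>2 / den\<^sup>2\<close> and
  \<open>\<omega> = \<alpha> L (t R)\<^sup>2 / den\<^sup>2\<close>, where \<open>den = Vd V + t R (Vd + V)\<close>, for \<open>t\<close> and \<open>V\<close> gives
  the stated formulas, and a device with only one resource would have zero marginal gain for it, so
  it receives neither.\<close>

definition alloc_feasible :: "nat \<Rightarrow> real \<Rightarrow> (nat \<Rightarrow> real) \<Rightarrow> bool" where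
  "alloc_feasible K C x \<longleftrightarrow> (\<Sum>k<K. x k) \<le> C \<and> (\<forall>k<K. x k \<ge> 0)"

definition alloc_optimal :: "nat \<Rightarrow> real \<Rightarrow> (nat \<Rightarrow> real \<Rightarrow> real) \<Rightarrow> (nat \<Rightarrow> real) \<Rightarrow> bool" where
  "alloc_optimal K C F x \<longleftrightarrow> alloc_feasible K C x \<and>
     (\<forall>y. alloc_feasible K C y \<longrightarrow> (\<Sum>k<K. F k (x k)) \<le> (\<Sum>k<K. F k (y k)))"

lemma sum_fun_upd:
  fixes F :: "'i \<Rightarrow> 'b \<Rightarrow> 'c::ab_group_add"
  assumes "finite A" "k \<in> A"
  shows "(\<Sum>i\<in>A. F i ((g(k := a)) i)) = (\<Sum>i\<in>A. F i (g i)) - F k (g k) + F k a"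
proof -
  have "(\<Sum>i\<in>A - {k}. F i ((g(k := a)) i)) = (\<Sum>i\<in>A - {k}. F i (g i))"
    by (rule sum.cong) auto
  then show ?thesis
    using assms by (simp add: sum.remove algebra_simps)
qed

lemma alloc_optimal_raise:
  assumes opt: "alloc_optimal K C F x" and j: "j < K"
    and "0 \<le> x j + e" "e \<le> C - (\<Sum>i<K. x i)"
  shows "F j (x j) \<le> F j (x j + e)"
proof -
  let ?y = "x(j := x j + e)"
  have "(\<Sum>i<K. ?y i) = (\<Sum>i<K. x i) + e"
    using sum_fun_upd[of "{..<K}" j "\<lambda>_ s. s" x] j by simp
  with assms have "alloc_feasible K C ?y"
    unfolding alloc_optimal_def alloc_feasible_def by auto
  with opt have "(\<Sum>i<K. F i (x i)) \<le> (\<Sum>i<K. F i (?y i))"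
    unfolding alloc_optimal_def by blast
  also have "\<dots> = (\<Sum>i<K. F i (x i)) - F j (x j) + F j (x j + e)"
    using j by (intro sum_fun_upd) auto
  finally show ?thesis by simp
qed

lemma alloc_optimal_transfer:
  assumes opt: "alloc_optimal K C F x" and jk: "j < K" "k < K" "j \<noteq> k"
    and "0 \<le> x j + e" "0 \<le> x k - e"
  shows "F j (x j) + F k (x k) \<le> F j (x j + e) + F k (x k - e)"
proof -
  let ?y = "x(j := x j + e, k := x k - e)"
  have upd: "(\<Sum>i<K. G i (?y i)) = (\<Sum>i<K. G i (x i)) - G j (x j) - G k (x k)
      + G j (x j + e) + G k (x k - e)" for G :: "nat \<Rightarrow> real \<Rightarrow> real"
  proof -
    have "(\<Sum>i<K. G i (?y i)) = (\<Sum>i<K. G i ((x(j := x j + e)) i)) - G k (x k) + G k (x k - e)"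
      using sum_fun_upd[of "{..<K}" k G "x(j := x j + e)" "x k - e"] jk
      by (simp only: fun_upd_other lessThan_iff finite_lessThan simp_thms)
    also have "(\<Sum>i<K. G i ((x(j := x j + e)) i)) = (\<Sum>i<K. G i (x i)) - G j (x j) + G j (x j + e)"
      using jk by (intro sum_fun_upd) auto
    finally show ?thesis by (simp add: algebra_simps del: fun_upd_apply)
  qed
  have "(\<Sum>i<K. ?y i) = (\<Sum>i<K. x i)"
    using upd[of "\<lambda>_ s. s"] by simp
  with assms have "alloc_feasible K C ?y"
    unfolding alloc_optimal_def alloc_feasible_def by auto
  with opt have "(\<Sum>i<K. F i (x i)) \<le> (\<Sum>i<K. F i (?y i))"
    unfolding alloc_optimal_def by blast
  then show ?thesis
    using upd[of F] by simp
qed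

lemma alloc_optimal_budget_exhausted:
  assumes opt: "alloc_optimal K C F x" and j: "j < K" "0 < x j"
    and deriv: "(F j has_real_derivative d) (at (x j))" and "d \<noteq> 0"
  shows "(\<Sum>i<K. x i) = C"
proof (rule ccontr)
  assume "(\<Sum>i<K. x i) \<noteq> C"
  with opt have slack: "0 < C - (\<Sum>i<K. x i)"
    unfolding alloc_optimal_def alloc_feasible_def by auto
  have "((\<lambda>e. F j (x j + e)) has_real_derivative d) (at 0)"
    using deriv DERIV_shift[of "F j" d 0 "x j"] by (simp add: add.commute)
  moreover have "0 < min (x j) (C - (\<Sum>i<K. x i))"
    using j slack by simp
  moreover have "\<forall>e. \<bar>0 - e\<bar> < min (x j) (C - (\<Sum>i<K. x i)) \<longrightarrow> F j (x j + 0) \<le> F j (x j + e)"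
    using alloc_optimal_raise[OF opt j(1)] by auto
  ultimately have "d = 0"
    by (rule DERIV_local_min)
  with \<open>d \<noteq> 0\<close> show False ..
qed

lemma alloc_optimal_equal_marginals:
  assumes opt: "alloc_optimal K C F x" and jk: "j < K" "k < K" "0 < x j" "0 < x k"
    and dj: "(F j has_real_derivative a) (at (x j))"
    and dk: "(F k has_real_derivative b) (at (x k))"
  shows "a = b"
proof (cases "j = k")
  case True
  with dj dk show ?thesis by (metis DERIV_unique)
next
  case False
  let ?\<psi> = "\<lambda>e. F j (x j + e) + F k (x k - e)"
  have "((\<lambda>e. F j (x j + e)) has_real_derivative a) (at 0)"
    using dj DERIV_shift[of "F j" a 0 "x j"] by (simp add: add.commute)
  moreover have "((\<lambda>e. F k (x k - e)) has_real_derivative b * -1) (at 0)"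
    using dk by (intro DERIV_chain2[of "F k"]) (auto intro!: derivative_eq_intros)
  ultimately have "(?\<psi> has_real_derivative a + b * -1) (at 0)"
    by (rule DERIV_add)
  moreover have "0 < min (x j) (x k)"
    using jk by simp
  moreover have "\<forall>e. \<bar>0 - e\<bar> < min (x j) (x k) \<longrightarrow> ?\<psi> 0 \<le> ?\<psi> e"
    using alloc_optimal_transfer[OF opt jk(1,2) False] by auto
  ultimately have "a + b * -1 = 0"
    by (rule DERIV_local_min)
  then show ?thesis by simp
qed

lemma alloc_optimal_stationary:
  assumes opt: "alloc_optimal K C F x" and j: "j < K" "0 < x j" "0 < p j"
    and deriv: "\<And>k. k < K \<Longrightarrow> 0 < x k \<Longrightarrow> (F k has_real_derivative - p k) (at (x k))"
  shows "(\<Sum>k<K. x k) = C" and "\<And>k. k < K \<Longrightarrow> 0 < x k \<Longrightarrow> p k = p j"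
proof -
  show "(\<Sum>k<K. x k) = C"
    using alloc_optimal_budget_exhausted[OF opt j(1,2) deriv[OF j(1,2)]] j(3) by simp
  show "p k = p j" if "k < K" "0 < x k" for k
    using alloc_optimal_equal_marginals[OF opt that(1) j(1) that(2) j(2) deriv[OF that] deriv[OF j(1,2)]] by simp
qed

lemma delay_den_pos:
  fixes Vd R t V :: real
  assumes "0 < Vd" "0 < R" "0 \<le> t" "0 \<le> V" "0 < t \<or> 0 < V"
  shows "0 < Vd * V + t * R * (Vd + V)"
  using assms by (smt (verit) mult_nonneg_nonneg mult_pos_pos)

lemma Dbar_eq_frac:
  assumes "0 < Vd" "0 < R" "0 \<le> t" "0 \<le> V" "0 < t \<or> 0 < V"
  shows "Dbar L Vd R t V = L * (t * R + V) / (Vd * V + t * R * (Vd + V))"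
  using delay_den_pos[OF assms] unfolding Dbar_def Let_def by simp

lemma Dbar_idle:
  assumes "0 < Vd" "0 < R" "t = 0 \<or> V = 0"
  shows "Dbar L Vd R t V = L / Vd"
  using assms unfolding Dbar_def Let_def by (auto simp: field_simps)

lemma Dbar_less_idle:
  assumes "0 < L" "0 < Vd" "0 < R" "0 < t" "0 < V"
  shows "Dbar L Vd R t V < L / Vd"
proof -
  have den: "0 < Vd * V + t * R * (Vd + V)"
    using assms by (intro delay_den_pos) auto
  have "L * (t * R + V) * Vd < L * (Vd * V + t * R * (Vd + V))"
    using assms by (simp add: algebra_simps)
  then show ?thesis
    using den assms by (simp add: Dbar_eq_frac divide_simps)
qed

text \<open>Minus the partial derivatives of the weighted delay \<open>\<alpha> * Dbar\<close> in \<open>t\<close> and in \<open>V\<close>; at an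
  optimum they are the multipliers \<open>\<theta>\<close> and \<open>\<omega>\<close> of the two budget constraints.\<close>

definition time_price :: "real \<Rightarrow> real \<Rightarrow> real \<Rightarrow> real \<Rightarrow> real \<Rightarrow> real \<Rightarrow> real" where
  "time_price \<alpha> L Vd R t V = \<alpha> * L * R * V\<^sup>2 / (Vd * V + t * R * (Vd + V))\<^sup>2"

definition compute_price :: "real \<Rightarrow> real \<Rightarrow> real \<Rightarrow> real \<Rightarrow> real \<Rightarrow> real \<Rightarrow> real" where
  "compute_price \<alpha> L Vd R t V = \<alpha> * L * (t * R)\<^sup>2 / (Vd * V + t * R * (Vd + V))\<^sup>2"

lemma time_price_pos:
  assumes "0 < \<alpha>" "0 < L" "0 < Vd" "0 < R" "0 \<le> t" "0 < V"
  shows "0 < time_price \<alpha> L Vd R t V"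
  using assms delay_den_pos[of Vd R t V] unfolding time_price_def by simp

lemma compute_price_pos:
  assumes "0 < \<alpha>" "0 < L" "0 < Vd" "0 < R" "0 < t" "0 \<le> V"
  shows "0 < compute_price \<alpha> L Vd R t V"
  using assms delay_den_pos[of Vd R t V] unfolding compute_price_def by simp

lemma Dbar_has_derivative_time:
  assumes "0 < Vd" "0 < R" "0 < t" "0 \<le> V"
  shows "((\<lambda>s. \<alpha> * Dbar L Vd R s V) has_real_derivative - time_price \<alpha> L Vd R t V) (at t)"
proof (rule has_field_derivative_transform_within_open)
  have den: "Vd * V + t * R * (Vd + V) \<noteq> 0"
    using delay_den_pos[of Vd R t V] assms by auto
  show "((\<lambda>s. \<alpha> * (L * (s * R + V) / (Vd * V + s * R * (Vd + V))))
      has_real_derivative - time_price \<alpha> L Vd R t V) (at t)"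
    unfolding time_price_def
    by (rule derivative_eq_intros refl | simp add: den)+ (simp add: den field_simps power2_eq_square)
  show "\<alpha> * (L * (s * R + V) / (Vd * V + s * R * (Vd + V))) = \<alpha> * Dbar L Vd R s V"
    if "s \<in> {0<..}" for s
    using that assms by (simp add: Dbar_eq_frac)
qed (use assms in auto)

lemma Dbar_has_derivative_compute:
  assumes "0 < Vd" "0 < R" "0 \<le> t" "0 < V"
  shows "((\<lambda>s. \<alpha> * Dbar L Vd R t s) has_real_derivative - compute_price \<alpha> L Vd R t V) (at V)"
proof (rule has_field_derivative_transform_within_open)
  have den: "Vd * V + t * R * (Vd + V) \<noteq> 0"
    using delay_den_pos[of Vd R t V] assms by auto
  show "((\<lambda>s. \<alpha> * (L * (t * R + s) / (Vd * s + t * R * (Vd + s))))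
      has_real_derivative - compute_price \<alpha> L Vd R t V) (at V)"
    unfolding compute_price_def
    by (rule derivative_eq_intros refl | simp add: den)+ (simp add: den field_simps power2_eq_square)
  show "\<alpha> * (L * (t * R + s) / (Vd * s + t * R * (Vd + s))) = \<alpha> * Dbar L Vd R t s"
    if "s \<in> {0<..}" for s
    using that assms by (simp add: Dbar_eq_frac)
qed (use assms in auto)

lemma stationary_allocation_closed_form:
  fixes \<alpha> L Vd R t V :: real
  assumes "0 < \<alpha>" "0 < L" "0 < Vd" "0 < R" "0 < t" "0 < V"
  shows "t = V * pos_part (sqrt (\<alpha> * L * R / time_price \<alpha> L Vd R t V) - Vd) / (R * (Vd + V))"
    and "V = t * R * pos_part (sqrt (\<alpha> * L / compute_price \<alpha> L Vd R t V) - Vd) / (t * R + Vd)"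
proof -
  define den where "den = Vd * V + t * R * (Vd + V)"
  have den_pos: "0 < den"
    unfolding den_def using assms by (intro delay_den_pos) auto
  have "\<alpha> * L * R / time_price \<alpha> L Vd R t V = (den / V)\<^sup>2"
    using assms den_pos unfolding time_price_def den_def[symmetric]
    by (simp add: field_simps power2_eq_square)
  then have "sqrt (\<alpha> * L * R / time_price \<alpha> L Vd R t V) = den / V"
    using assms den_pos by simp
  then have "sqrt (\<alpha> * L * R / time_price \<alpha> L Vd R t V) - Vd = t * R * (Vd + V) / V"
    using assms by (simp add: den_def field_simps)
  moreover have "0 < t * R * (Vd + V) / V"
    using assms by simp
  ultimately show "t = V * pos_part (sqrt (\<alpha> * L * R / time_price \<alpha> L Vd R t V) - Vd) / (R * (Vd + V))"
    using assms by (simp add: pos_part_def)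
  have "\<alpha> * L / compute_price \<alpha> L Vd R t V = (den / (t * R))\<^sup>2"
    using assms den_pos unfolding compute_price_def den_def[symmetric]
    by (simp add: field_simps power2_eq_square)
  then have "sqrt (\<alpha> * L / compute_price \<alpha> L Vd R t V) = den / (t * R)"
    using assms den_pos by simp
  then have "sqrt (\<alpha> * L / compute_price \<alpha> L Vd R t V) - Vd = V * (t * R + Vd) / (t * R)"
    using assms by (simp add: den_def field_simps)
  moreover have "0 < V * (t * R + Vd) / (t * R)"
    using assms by (intro divide_pos_pos mult_pos_pos add_pos_pos) auto
  moreover have "0 < t * R + Vd"
    using assms by (intro add_pos_pos) auto
  ultimately show "V = t * R * pos_part (sqrt (\<alpha> * L / compute_price \<alpha> L Vd R t V) - Vd) / (t * R + Vd)"
    using assms by (simp add: pos_part_def)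
qed

lemma device_allocation_closed_form:
  fixes \<alpha> L Vd R t V \<theta> \<omega> :: real
  assumes "0 < \<alpha>" "0 < L" "0 < Vd" "0 < R" "0 \<le> t" "0 \<le> V" "0 < \<theta>" "0 < \<omega>"
    and \<theta>: "0 < t \<Longrightarrow> time_price \<alpha> L Vd R t V = \<theta>"
    and \<omega>: "0 < V \<Longrightarrow> compute_price \<alpha> L Vd R t V = \<omega>"
  shows "t = V * pos_part (sqrt (\<alpha> * L * R / \<theta>) - Vd) / (R * (Vd + V)) \<and>
         V = t * R * pos_part (sqrt (\<alpha> * L / \<omega>) - Vd) / (t * R + Vd)"
proof (cases "0 < t")
  case True
  then have "V \<noteq> 0"
    using \<theta> \<open>0 < \<theta>\<close> by (auto simp: time_price_def)
  then have "0 < V"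
    using \<open>0 \<le> V\<close> by simp
  then show ?thesis
    using stationary_allocation_closed_form[of \<alpha> L Vd R t V] True \<theta> \<omega> assms(1-4) by simp
next
  case False
  then have "t = 0"
    using \<open>0 \<le> t\<close> by simp
  moreover have "V = 0"
    using \<omega> \<open>0 < \<omega>\<close> \<open>0 \<le> V\<close> \<open>t = 0\<close> by (force simp: compute_price_def)
  ultimately show ?thesis by simp
qed

lemma optimal_alloc_optimal_time:
  assumes "optimal K VC \<alpha> L Vd R t V"
  shows "alloc_optimal K 1 (\<lambda>k s. \<alpha> k * Dbar (L k) (Vd k) (R k) s (V k)) t"
  using assms unfolding optimal_def alloc_optimal_def feasible_def alloc_feasible_def objective_def
  by blast

lemma optimal_alloc_optimal_compute:
  assumes "optimal K VC \<alpha> L Vd R t V"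
  shows "alloc_optimal K VC (\<lambda>k s. \<alpha> k * Dbar (L k) (Vd k) (R k) (t k) s) V"
  using assms unfolding optimal_def alloc_optimal_def feasible_def alloc_feasible_def objective_def
  by blast

lemma optimal_exists_fully_served:
  assumes "0 < K" "0 < VC" "\<forall>k<K. 0 < \<alpha> k" "\<forall>k<K. 0 < L k" "\<forall>k<K. 0 < Vd k" "\<forall>k<K. 0 < R k"
    and opt: "optimal K VC \<alpha> L Vd R t V"
  obtains j where "j < K" "0 < t j" "0 < V j"
proof (rule ccontr)
  assume none: "\<not> thesis"
  note served = that
  have idle: "Dbar (L k) (Vd k) (R k) (t k) (V k) = L k / Vd k" if k: "k < K" for k
  proof -
    have "0 \<le> t k" "0 \<le> V k" "\<not> (0 < t k \<and> 0 < V k)"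
      using opt k none served[of k] by (auto simp: optimal_def feasible_def)
    then show ?thesis
      using assms k by (intro Dbar_idle) auto
  qed
  define t1 where "t1 = (\<lambda>i::nat. if i = 0 then 1 else 0 :: real)"
  define V1 where "V1 = (\<lambda>i::nat. if i = 0 then VC else 0)"
  have improved: "\<alpha> k * Dbar (L k) (Vd k) (R k) (t1 k) (V1 k) \<le> \<alpha> k * Dbar (L k) (Vd k) (R k) (t k) (V k)"
    if k: "k < K" for k
  proof -
    have "Dbar (L k) (Vd k) (R k) (t1 k) (V1 k) \<le> L k / Vd k"
      using assms k Dbar_less_idle[of "L 0" "Vd 0" "R 0" 1 VC]
      by (cases "k = 0") (auto simp: t1_def V1_def Dbar_idle)
    then show ?thesis
      unfolding idle[OF k] using assms k by (intro mult_left_mono) auto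
  qed
  have "feasible K VC t1 V1"
    unfolding feasible_def t1_def V1_def using assms by auto
  with opt have "objective K \<alpha> L Vd R t V \<le> objective K \<alpha> L Vd R t1 V1"
    unfolding optimal_def by blast
  moreover have "objective K \<alpha> L Vd R t1 V1 < objective K \<alpha> L Vd R t V"
    unfolding objective_def
  proof (rule sum_strict_mono_ex1)
    show "\<forall>k\<in>{..<K}. \<alpha> k * Dbar (L k) (Vd k) (R k) (t1 k) (V1 k) \<le> \<alpha> k * Dbar (L k) (Vd k) (R k) (t k) (V k)"
      using improved by blast
    show "\<exists>k\<in>{..<K}. \<alpha> k * Dbar (L k) (Vd k) (R k) (t1 k) (V1 k) < \<alpha> k * Dbar (L k) (Vd k) (R k) (t k) (V k)"
    proof
      show "0 \<in> {..<K}"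
        using assms by simp
      show "\<alpha> 0 * Dbar (L 0) (Vd 0) (R 0) (t1 0) (V1 0) < \<alpha> 0 * Dbar (L 0) (Vd 0) (R 0) (t 0) (V 0)"
        unfolding idle[OF \<open>0 < K\<close>] t1_def V1_def
        using assms Dbar_less_idle[of "L 0" "Vd 0" "R 0" 1 VC] by (intro mult_strict_left_mono) auto
    qed
  qed simp
  ultimately show False by simp
qed

lemma optimal_time_stationary:
  assumes "\<forall>k<K. 0 < \<alpha> k" "\<forall>k<K. 0 < L k" "\<forall>k<K. 0 < Vd k" "\<forall>k<K. 0 < R k"
    and opt: "optimal K VC \<alpha> L Vd R t V" and j: "j < K" "0 < t j" "0 < V j"
  shows "(\<Sum>k<K. t k) = 1"
    and "\<And>k. k < K \<Longrightarrow> 0 < t k \<Longrightarrow>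
      time_price (\<alpha> k) (L k) (Vd k) (R k) (t k) (V k) = time_price (\<alpha> j) (L j) (Vd j) (R j) (t j) (V j)"
proof -
  let ?p = "\<lambda>k. time_price (\<alpha> k) (L k) (Vd k) (R k) (t k) (V k)"
  have "0 \<le> V k" if "k < K" for k
    using opt that unfolding optimal_def feasible_def by auto
  then have "((\<lambda>s. \<alpha> k * Dbar (L k) (Vd k) (R k) s (V k)) has_real_derivative - ?p k) (at (t k))"
    if "k < K" "0 < t k" for k
    using assms that by (intro Dbar_has_derivative_time) auto
  moreover have "0 < ?p j"
    using assms by (intro time_price_pos) auto
  ultimately show "(\<Sum>k<K. t k) = 1" "\<And>k. k < K \<Longrightarrow> 0 < t k \<Longrightarrow> ?p k = ?p j"
    using alloc_optimal_stationary[where p = ?p, OF optimal_alloc_optimal_time[OF opt] j(1,2)] by blast+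
qed

lemma optimal_compute_stationary:
  assumes "\<forall>k<K. 0 < \<alpha> k" "\<forall>k<K. 0 < L k" "\<forall>k<K. 0 < Vd k" "\<forall>k<K. 0 < R k"
    and opt: "optimal K VC \<alpha> L Vd R t V" and j: "j < K" "0 < t j" "0 < V j"
  shows "(\<Sum>k<K. V k) = VC"
    and "\<And>k. k < K \<Longrightarrow> 0 < V k \<Longrightarrow>
      compute_price (\<alpha> k) (L k) (Vd k) (R k) (t k) (V k) = compute_price (\<alpha> j) (L j) (Vd j) (R j) (t j) (V j)"
proof -
  let ?p = "\<lambda>k. compute_price (\<alpha> k) (L k) (Vd k) (R k) (t k) (V k)"
  have "0 \<le> t k" if "k < K" for k
    using opt that unfolding optimal_def feasible_def by auto
  then have "((\<lambda>s. \<alpha> k * Dbar (L k) (Vd k) (R k) (t k) s) has_real_derivative - ?p k) (at (V k))"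
    if "k < K" "0 < V k" for k
    using assms that by (intro Dbar_has_derivative_compute) auto
  moreover have "0 < ?p j"
    using assms by (intro compute_price_pos) auto
  ultimately show "(\<Sum>k<K. V k) = VC" "\<And>k. k < K \<Longrightarrow> 0 < V k \<Longrightarrow> ?p k = ?p j"
    using alloc_optimal_stationary[where p = ?p, OF optimal_alloc_optimal_compute[OF opt] j(1,3)] by blast+
qed

theorem theorem5:
  fixes K :: nat and VC :: real and \<alpha> L Vd R ts Vs :: "nat \<Rightarrow> real"
  assumes "K \<ge> 1" and "VC > 0"
    and "\<forall>k<K. \<alpha> k > 0" and "(\<Sum>k<K. \<alpha> k) = 1"
    and "\<forall>k<K. L k > 0" and "\<forall>k<K. Vd k > 0" and "\<forall>k<K. R k > 0"
    and "optimal K VC \<alpha> L Vd R ts Vs"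
  shows "\<exists>\<theta> \<omega>. \<theta> > 0 \<and> \<omega> > 0 \<and>
     (\<forall>k<K.
        ts k = Vs k * pos_part (sqrt (\<alpha> k * L k * R k / \<theta>) - Vd k)
               / (R k * (Vd k + Vs k)) \<and>
        Vs k = ts k * R k * pos_part (sqrt (\<alpha> k * L k / \<omega>) - Vd k)
               / (ts k * R k + Vd k)) \<and>
     (\<Sum>k<K. ts k) = 1 \<and> (\<Sum>k<K. Vs k) = VC"
proof -
  have pos: "0 < \<alpha> k" "0 < L k" "0 < Vd k" "0 < R k" if "k < K" for k
    using assms that by auto
  have nonneg: "0 \<le> ts k" "0 \<le> Vs k" if "k < K" for k
    using assms(8) that unfolding optimal_def feasible_def by auto
  have "0 < K"
    using assms(1) by simp
  then obtain j where j: "j < K" "0 < ts j" "0 < Vs j"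
    by (rule optimal_exists_fully_served[OF _ assms(2,3,5,6,7,8)])
  define \<theta> where "\<theta> = time_price (\<alpha> j) (L j) (Vd j) (R j) (ts j) (Vs j)"
  define \<omega> where "\<omega> = compute_price (\<alpha> j) (L j) (Vd j) (R j) (ts j) (Vs j)"
  have "0 < \<theta>" "0 < \<omega>"
    unfolding \<theta>_def \<omega>_def using j pos by (auto intro!: time_price_pos compute_price_pos)
  moreover note time = optimal_time_stationary[OF assms(3,5,6,7,8) j, folded \<theta>_def]
  moreover note compute = optimal_compute_stationary[OF assms(3,5,6,7,8) j, folded \<omega>_def]
  moreover have "\<forall>k<K. ts k = Vs k * pos_part (sqrt (\<alpha> k * L k * R k / \<theta>) - Vd k) / (R k * (Vd k + Vs k)) \<and>
        Vs k = ts k * R k * pos_part (sqrt (\<alpha> k * L k / \<omega>) - Vd k) / (ts k * R k + Vd k)"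
    using pos nonneg \<open>0 < \<theta>\<close> \<open>0 < \<omega>\<close> time(2) compute(2)
    by (intro allI impI device_allocation_closed_form) auto
  ultimately show ?thesis by blast
qed

end
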